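(* There exist infinitely many positive odd integers $n$ with the property that there exist positive integers $d_1, d_2$, each dividing $\frac{n^2+1}{2}$, such that $d_1+d_2=2n$. Moreover, any such pair satisfies $\gcd(d_1,d_2)=1$ and $d_1d_2=\frac{n^2+1}{2}$. *)

theory Defs
  imports Main
begin

end

theory Submission
  imports Defs "HOL-Library.Infinite_Set"
begin

text \<open>
  For odd \<open>n\<close> put \<open>N = (n\<^sup>2 + 1) / 2\<close>. If \<open>d\<^sub>1, d\<^sub>2\<close> divide \<open>N\<close> and
  \<open>d\<^sub>1 + d\<^sub>2 = 2n\<close>, then \<open>gcd d\<^sub>1 d\<^sub>2\<close> divides \<open>8N - (2n)\<^sup>2 = 4\<close> and is odd, hence is 1;
  moreover \<open>d\<^sub>2\<^sup>2 \<equiv> 4n\<^sup>2 \<equiv> -4 (mod d\<^sub>1)\<close> and symmetrically, so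
  \<open>d\<^sub>1\<^sup>2 + d\<^sub>2\<^sup>2 + 4 = m d\<^sub>1 d\<^sub>2\<close> for some \<open>m\<close>. Vieta jumping on odd solutions of this
  equation forces \<open>m = 6\<close>, and then \<open>8N = (d\<^sub>1 + d\<^sub>2)\<^sup>2 + 4 = 8 d\<^sub>1 d\<^sub>2\<close>.
  Conversely, jumping upwards \<open>(x, y) \<mapsto> (y, 6y - x)\<close> from \<open>(1, 1)\<close> yields infinitely
  many odd solutions of \<open>x\<^sup>2 + y\<^sup>2 + 4 = 6xy\<close>, and \<open>n = (x + y)/2\<close> works with
  \<open>d\<^sub>1 = x, d\<^sub>2 = y\<close>.
\<close>

lemma odd_dvd_4_eq_1:
  fixes a :: nat
  assumes "odd a" and "a dvd 4"
  shows "a = 1"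
proof -
  have "a \<le> 4"
    using assms(2) by (simp add: dvd_imp_le)
  with \<open>odd a\<close> have "a = 1 \<or> a = 3"
    by presburger
  with \<open>a dvd 4\<close> show ?thesis
    by auto
qed

lemma vieta_diagonal_quotient:
  fixes a m :: nat
  assumes "odd a" and "a^2 + a^2 + 4 = m * a * a"
  shows "m = 6"
proof -
  have eq: "2 * a^2 + 4 = m * a^2"
    using assms(2) by (simp add: power2_eq_square)
  then have "a dvd 4"
    by (metis dvd_add_right_iff dvd_mult dvd_triv_right power2_eq_square)
  with \<open>odd a\<close> have "a = 1"
    by (rule odd_dvd_4_eq_1)
  with eq show ?thesis by simp
qed

lemma vieta_descent:
  fixes a b m :: nat
  assumes "0 < b" "b < a" "odd a" "odd b" "a^2 + b^2 + 4 = m * a * b"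
  obtains c where "0 < c" "c < a" "odd c" "c^2 + b^2 + 4 = m * c * b"
proof
  define c where "c = m * b - a"
  have "b + 2 \<le> a"
    using assms(2-4) by presburger
  then have "(b + 2)^2 \<le> a^2"
    by (simp add: power_mono)
  then have small: "b^2 + 4 < a^2"
    using assms(1) by (simp add: power2_eq_square algebra_simps)
  have "a * (m * b) = a * a + (b^2 + 4)"
    using assms(5) by (simp add: power2_eq_square algebra_simps)
  then have "a * a < a * (m * b)"
    by simp
  then have "a < m * b"
    by simp
  have ac: "a * c = b^2 + 4"
    using \<open>a * (m * b) = a * a + (b^2 + 4)\<close> unfolding c_def by (simp add: diff_mult_distrib2)
  show "0 < c"
    using \<open>a < m * b\<close> unfolding c_def by simp
  show "c < a"
  proof (rule ccontr)
    assume "\<not> c < a"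
    then have "a * a \<le> a * c" by simp
    with ac small show False by (simp add: power2_eq_square)
  qed
  have "odd (a * c)"
    using ac assms(4) by simp
  then show "odd c"
    by simp
  have "c^2 + b^2 + 4 = c * (c + a)"
    using ac by (simp add: power2_eq_square algebra_simps)
  also have "c + a = m * b"
    using \<open>a < m * b\<close> unfolding c_def by simp
  finally show "c^2 + b^2 + 4 = m * c * b"
    by (simp add: algebra_simps)
qed

lemma odd_vieta_quotient_eq_6:
  fixes a b m :: nat
  assumes "0 < a" "0 < b" "odd a" "odd b" "a^2 + b^2 + 4 = m * a * b"
  shows "m = 6"
  using assms
proof (induction "a + b" arbitrary: a b rule: less_induct)
  case less
  consider "a = b" | "b < a" | "a < b"
    by linarith
  then show ?case
  proof cases
    case 1
    with less.prems show ?thesis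
      using vieta_diagonal_quotient by blast
  next
    case 2
    with less.prems obtain c where "0 < c" "c < a" "odd c" "c^2 + b^2 + 4 = m * c * b"
      using vieta_descent by blast
    with less.prems show ?thesis
      using less.hyps[of c b] by simp
  next
    case 3
    from less.prems have "b^2 + a^2 + 4 = m * b * a"
      by (simp add: algebra_simps)
    with 3 less.prems obtain c where "0 < c" "c < b" "odd c" "c^2 + a^2 + 4 = m * c * a"
      using vieta_descent by blast
    with less.prems show ?thesis
      using less.hyps[of a c] by (simp add: algebra_simps)
  qed
qed

lemma dvd_square_plus_4_of_sum:
  fixes d1 d2 n N :: nat
  assumes "d1 dvd N" "n^2 + 1 = 2 * N" "d1 + d2 = 2 * n"
  shows "d1 dvd d2^2 + 4"
proof -
  have d2: "int d2 = 2 * int n - int d1"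
    using assms(3) by linarith
  have "int n^2 + 1 = 2 * int N"
    using arg_cong[OF assms(2), of int] by simp
  then have "int d2^2 + 4 = int d1 * (int d1 - 4 * int n) + 8 * int N"
    unfolding d2 by (simp add: power2_eq_square algebra_simps)
  with assms(1) have "int d1 dvd int (d2^2 + 4)"
    by simp
  then show ?thesis
    by (simp only: int_dvd_int_iff)
qed

lemma coprime_divisors_of_sum:
  fixes d1 d2 n N :: nat
  assumes "odd N" "d1 dvd N" "d2 dvd N" "n^2 + 1 = 2 * N" "d1 + d2 = 2 * n"
  shows "coprime d1 d2"
proof -
  define g where "g = gcd d1 d2"
  have "g dvd N"
    using assms(2) unfolding g_def by (meson dvd_trans gcd_dvd1)
  moreover have "4 * n^2 + 4 = 8 * N"
    using assms(4) by simp
  ultimately have "g dvd 4 * n^2 + 4"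
    by simp
  moreover have "g dvd 2 * n"
    using assms(5) unfolding g_def by (metis dvd_add gcd_dvd1 gcd_dvd2)
  then have "g dvd (2 * n) * (2 * n)"
    by (rule dvd_mult2)
  then have "g dvd 4 * n^2"
    by (simp add: power2_eq_square mult_ac)
  ultimately have "g dvd 4"
    by (simp add: dvd_add_right_iff)
  moreover have "odd g"
    using assms(1) \<open>g dvd N\<close> by (meson dvd_trans even_mult_iff dvd_refl)
  ultimately have "g = 1"
    using odd_dvd_4_eq_1 by blast
  then show ?thesis
    unfolding g_def by (simp add: coprime_iff_gcd_eq_1)
qed

lemma divisors_of_sum_product:
  fixes d1 d2 n N :: nat
  assumes "odd N" "d1 dvd N" "d2 dvd N" "n^2 + 1 = 2 * N" "d1 + d2 = 2 * n"
    and "0 < d1" "0 < d2"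
  shows "d1 * d2 = N"
proof -
  have "odd d1" "odd d2"
    using assms(1-3) by (meson dvd_trans even_mult_iff dvd_refl)+
  have "d1 dvd d1^2 + d2^2 + 4"
    using dvd_square_plus_4_of_sum[OF assms(2,4,5)] by (simp add: power2_eq_square add.assoc)
  moreover have "d2 dvd d1^2 + d2^2 + 4"
  proof -
    have "d2 dvd (d1^2 + 4) + d2 * d2"
      using dvd_square_plus_4_of_sum[OF assms(3,4), of d1] assms(5) by (simp add: add.commute)
    then show ?thesis
      by (simp add: power2_eq_square add_ac)
  qed
  ultimately have "d1 * d2 dvd d1^2 + d2^2 + 4"
    using coprime_divisors_of_sum[OF assms(1-5)] by (rule divides_mult)
  then obtain m where "d1^2 + d2^2 + 4 = d1 * d2 * m"
    by blast
  then have m: "d1^2 + d2^2 + 4 = m * d1 * d2"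
    by (simp add: mult_ac)
  with assms(6,7) \<open>odd d1\<close> \<open>odd d2\<close> have "m = 6"
    by (rule odd_vieta_quotient_eq_6)
  have "8 * N = (d1 + d2)^2 + 4"
    using assms(4,5) by (simp add: power2_eq_square algebra_simps)
  also have "\<dots> = (d1^2 + d2^2 + 4) + 2 * d1 * d2"
    by (simp add: power2_eq_square algebra_simps)
  also have "\<dots> = 8 * (d1 * d2)"
    using m \<open>m = 6\<close> by simp
  finally show ?thesis
    by simp
qed

lemma odd_vieta_solution_jump:
  fixes x y :: nat
  assumes "x \<le> y" "odd x" "x^2 + y^2 + 4 = 6 * x * y"
  shows "y^2 + (6 * y - x)^2 + 4 = 6 * y * (6 * y - x)" and "odd (6 * y - x)" and "x < 6 * y - x"
proof -
  define z where "z = 6 * y - x"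
  have z: "int z = 6 * int y - int x"
    using assms(1) unfolding z_def by simp
  have "int x^2 + int y^2 + 4 = 6 * int x * int y"
    using arg_cong[OF assms(3), of int] by simp
  then have "int (y^2 + z^2 + 4) = int (6 * y * z)"
    unfolding of_nat_add of_nat_mult of_nat_power z by (simp add: power2_eq_square algebra_simps)
  then show "y^2 + (6 * y - x)^2 + 4 = 6 * y * (6 * y - x)"
    unfolding z_def[symmetric] by (simp only: of_nat_eq_iff)
  have "z + x = 6 * y"
    using assms(1) unfolding z_def by simp
  then have "even (z + x)"
    by simp
  with assms(2) show "odd (6 * y - x)"
    unfolding z_def[symmetric] by simp
  show "x < 6 * y - x"
    using assms by (cases "y = 0") auto
qed

lemma odd_vieta_solutions_unbounded:
  "\<exists>x y :: nat. 0 < x \<and> x \<le> y \<and> odd x \<and> odd y \<and> x^2 + y^2 + 4 = 6 * x * y \<and> M < x + y"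
proof (induction M)
  case 0
  show ?case
    by (rule exI[of _ 1], rule exI[of _ 1]) simp
next
  case (Suc M)
  then obtain x y :: nat
    where "0 < x" "x \<le> y" "odd x" "odd y" "x^2 + y^2 + 4 = 6 * x * y" "M < x + y"
    by blast
  with odd_vieta_solution_jump[of x y] show ?case
    by (intro exI[of _ y] exI[of _ "6 * y - x"]) auto
qed

lemma divisor_pair_of_odd_vieta_solution:
  fixes x y :: nat
  assumes "odd x" "odd y" "x^2 + y^2 + 4 = 6 * x * y"
  shows "odd ((x + y) div 2)" and "((x + y) div 2)^2 + 1 = 2 * (x * y)"
proof -
  have "even (x + y)"
    using assms(1,2) by simp
  then obtain n where n: "x + y = 2 * n" ..
  have "(x + y)^2 + 4 = 4 * (n^2 + 1)"
    unfolding n by (simp add: power2_eq_square)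
  then have "4 * (n^2 + 1) = (x^2 + y^2 + 4) + 2 * x * y"
    by (simp add: power2_eq_square algebra_simps)
  also have "\<dots> = 4 * (2 * (x * y))"
    using assms(3) by simp
  finally have sq: "n^2 + 1 = 2 * (x * y)"
    by simp
  then show "((x + y) div 2)^2 + 1 = 2 * (x * y)"
    using n by simp
  from sq have "even (n^2 + 1)"
    by simp
  then have "odd n"
    by simp
  then show "odd ((x + y) div 2)"
    using n by simp
qed

lemma odd_divisor_pair_above:
  "\<exists>n > k. odd n \<and> (\<exists>d1 d2 :: nat. 0 < d1 \<and> 0 < d2 \<and> d1 dvd (n^2 + 1) div 2 \<and>
      d2 dvd (n^2 + 1) div 2 \<and> d1 + d2 = 2 * n)"
proof -
  obtain x y :: nat
    where "0 < x" "x \<le> y" "odd x" "odd y" "x^2 + y^2 + 4 = 6 * x * y" "2 * k < x + y"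
    using odd_vieta_solutions_unbounded by blast
  define n where "n = (x + y) div 2"
  have "odd n" "(n^2 + 1) div 2 = x * y"
    unfolding n_def using divisor_pair_of_odd_vieta_solution[of x y] \<open>odd x\<close> \<open>odd y\<close>
      \<open>x^2 + y^2 + 4 = 6 * x * y\<close> by auto
  moreover have "x + y = 2 * n"
    unfolding n_def using \<open>odd x\<close> \<open>odd y\<close> by simp
  ultimately show ?thesis
    using \<open>0 < x\<close> \<open>x \<le> y\<close> \<open>2 * k < x + y\<close>
    by (intro exI[of _ n] conjI exI[of _ x] exI[of _ y]) auto
qed

lemma divisor_pair_coprime_and_product:
  fixes n d1 d2 :: nat
  assumes "odd n" "0 < d1" "0 < d2" "d1 dvd (n^2 + 1) div 2" "d2 dvd (n^2 + 1) div 2"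
    and "d1 + d2 = 2 * n"
  shows "coprime d1 d2" and "d1 * d2 = (n^2 + 1) div 2"
proof -
  define N where "N = (n^2 + 1) div 2"
  from \<open>odd n\<close> have "n^2 + 1 = 2 * N" "odd N"
    unfolding N_def by (auto elim!: oddE simp: power2_eq_square algebra_simps)
  with assms show "coprime d1 d2" and "d1 * d2 = (n^2 + 1) div 2"
    using coprime_divisors_of_sum[of N d1 d2 n] divisors_of_sum_product[of N d1 d2 n]
    unfolding N_def[symmetric] by simp_all
qed

theorem proposition1:
  shows "infinite {n :: nat. n > 0 \<and> odd n \<and>
            (\<exists>d1 d2 :: nat. d1 > 0 \<and> d2 > 0 \<and> d1 dvd (n^2 + 1) div 2 \<and>
               d2 dvd (n^2 + 1) div 2 \<and> d1 + d2 = 2 * n)}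
       \<and> (\<forall>n d1 d2 :: nat. n > 0 \<longrightarrow> odd n \<longrightarrow> d1 > 0 \<longrightarrow> d2 > 0 \<longrightarrow>
            d1 dvd (n^2 + 1) div 2 \<longrightarrow> d2 dvd (n^2 + 1) div 2 \<longrightarrow> d1 + d2 = 2 * n \<longrightarrow>
            gcd d1 d2 = 1 \<and> d1 * d2 = (n^2 + 1) div 2)"
    (is "infinite ?S \<and> ?pairs")
proof
  have "\<exists>n > k. n \<in> ?S" for k
    using odd_divisor_pair_above[of k] by (auto intro: odd_pos)
  then show "infinite ?S"
    unfolding infinite_nat_iff_unbounded by blast
  show ?pairs
    using divisor_pair_coprime_and_product[unfolded coprime_iff_gcd_eq_1] by blast
qed

end
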